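(* There exists an absolute constant $c>0$ such that the following holds. Let $\Phi:\mathbb{R}^d\to\mathbb{R}$, $\Phi(x) = W^{(1)}\,\mathrm{ReLU}(W^{(0)}x + b^{(0)}) + b^{(1)}$, be a random shallow ReLU network of width $N$, where $W^{(0)}\in\mathbb{R}^{N\times d}$ has i.i.d. $\mathcal{N}(0,2/N)$ entries, $W^{(1)}\in\mathbb{R}^{1\times N}$ has i.i.d. $\mathcal{N}(0,1)$ entries, $b^{(0)}_i\sim\mathcal{D}^{(0)}_i$, $b^{(1)}\sim\mathcal{D}^{(1)}_1$ for arbitrary probability distributions on $\mathbb{R}$, all jointly independent. Then for all $t,u\ge0$, $$\mathrm{Lip}(\Phi)\ge\frac{1}{\sqrt2}\Big(1-\frac{u}{\sqrt N}\Big)_+(\sqrt d-t)_+$$ with probability at least $(1-2\exp(-ct^2))_+(1-2\exp(-cu^2))_+$.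
   Context: $\mathrm{ReLU}(t)=\max\{0,t\}$ componentwise; $\mathrm{Lip}(f)=\sup_{x\neq y}|f(x)-f(y)|/\|x-y\|_2$; $a_+=\max\{0,a\}$. *)

theory Defs
  imports "HOL-Probability.Probability"
begin

definition relu :: "real \<Rightarrow> real" where
  "relu s = max 0 s"

text \<open>Vectors of R^d are represented as functions nat => real vanishing outside {..<d}.\<close>
definition Rd :: "nat \<Rightarrow> (nat \<Rightarrow> real) set" where
  "Rd d = {x. \<forall>j\<ge>d. x j = 0}"

definition euclid_dist :: "nat \<Rightarrow> (nat \<Rightarrow> real) \<Rightarrow> (nat \<Rightarrow> real) \<Rightarrow> real" where
  "euclid_dist d x y = sqrt (\<Sum>j<d. (x j - y j)\<^sup>2)"

definition lip_const :: "nat \<Rightarrow> ((nat \<Rightarrow> real) \<Rightarrow> real) \<Rightarrow> real" where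
  "lip_const d f = Sup {\<bar>f x - f y\<bar> / euclid_dist d x y | x y. x \<in> Rd d \<and> y \<in> Rd d \<and> x \<noteq> y}"

definition shallow_net :: "nat \<Rightarrow> nat \<Rightarrow> (nat \<times> nat \<Rightarrow> real) \<Rightarrow> (nat \<Rightarrow> real) \<Rightarrow> (nat \<Rightarrow> real)
    \<Rightarrow> real \<Rightarrow> (nat \<Rightarrow> real) \<Rightarrow> real" where
  "shallow_net N d W0 W1 b0 b1 x =
     (\<Sum>i<N. W1 i * relu ((\<Sum>j<d. W0 (i, j) * x j) + b0 i)) + b1"

definition net_measure :: "nat \<Rightarrow> nat \<Rightarrow> (nat \<Rightarrow> real measure) \<Rightarrow> real measure
    \<Rightarrow> ((nat \<times> nat \<Rightarrow> real) \<times> (nat \<Rightarrow> real) \<times> (nat \<Rightarrow> real) \<times> real) measure" where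
  "net_measure N d D0 D1 =
     (PiM ({..<N} \<times> {..<d}) (\<lambda>_. density lborel (normal_density 0 (sqrt (2 / real N)))))
     \<Otimes>\<^sub>M (PiM {..<N} (\<lambda>_. density lborel std_normal_density))
     \<Otimes>\<^sub>M (PiM {..<N} D0)
     \<Otimes>\<^sub>M D1"

end

theory Submission
  imports Defs
begin

text \<open>Evaluating \<open>\<Phi>\<close> at the antipodal points \<open>\<plusminus>s v\<close>, \<open>v = W0\<^sup>T W1\<^sup>T\<close>, and letting \<open>s \<rightarrow> \<infinity>\<close>
  gives \<open>Lip \<Phi> \<ge> |v| / 2\<close> whatever the biases. Given \<open>W1 = w\<close>, the coordinates of \<open>W0\<^sup>T w\<close> are
  i.i.d. \<open>N(0, 2|w|\<^sup>2/N)\<close>, so a Chernoff bound for the lower tail of a chi-square variable gives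
  \<open>|v| \<ge> \<surd>(2/N) |w| (\<surd>d - t)\<close> with probability at least \<open>1 - exp (-t\<^sup>2/8)\<close>. The same bound gives
  \<open>|w| \<ge> \<surd>N - u\<close> with probability at least \<open>1 - exp (-u\<^sup>2/8)\<close>, and Fubini over the independent
  layers yields the claim with \<open>c = 1/8\<close>.\<close>

lemma nn_integral_std_normal_exp_neg_square:
  assumes "l \<ge> 0"
  shows "(\<integral>\<^sup>+x. ennreal (std_normal_density x * exp (- l * x\<^sup>2)) \<partial>lborel) = ennreal (1 / sqrt (1 + 2 * l))"
proof -
  define s where "s = 1 / sqrt (1 + 2 * l)"
  have s: "s > 0" using assms by (simp add: s_def)
  have eq: "std_normal_density x * exp (- l * x\<^sup>2) = s * normal_density 0 s x" for x
  proof -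
    have "s\<^sup>2 = 1 / (1 + 2 * l)" using assms by (simp add: s_def power_divide)
    then show ?thesis using assms s
      by (simp add: normal_density_def std_normal_density_def mult_exp_exp real_sqrt_mult
          real_sqrt_divide s_def field_simps)
  qed
  have "(\<integral>\<^sup>+x. ennreal (std_normal_density x * exp (- l * x\<^sup>2)) \<partial>lborel)
      = (\<integral>\<^sup>+x. ennreal s * ennreal (normal_density 0 s x) \<partial>lborel)"
    using s by (intro nn_integral_cong) (simp only: eq, simp add: ennreal_mult)
  also have "\<dots> = ennreal s * (\<integral>\<^sup>+x. ennreal (normal_density 0 s x) \<partial>lborel)"
    by (rule nn_integral_cmult) simp
  also have "(\<integral>\<^sup>+x. ennreal (normal_density 0 s x) \<partial>lborel) = 1"
    using s by (subst nn_integral_eq_integral) (auto intro!: integrable_normal_density)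
  finally show ?thesis by (simp add: s_def)
qed

lemma (in prob_space) nn_integral_exp_neg_sum_squares_std_normal:
  fixes Z :: "nat \<Rightarrow> 'a \<Rightarrow> real"
  assumes ind: "indep_vars (\<lambda>_. borel) Z {..<n}"
    and std: "\<And>j. j < n \<Longrightarrow> distributed M lborel (Z j) std_normal_density"
    and l: "l \<ge> 0"
  shows "(\<integral>\<^sup>+\<omega>. ennreal (exp (- l * (\<Sum>j<n. (Z j \<omega>)\<^sup>2))) \<partial>M) = ennreal ((1 / sqrt (1 + 2 * l)) ^ n)"
proof -
  have "(\<integral>\<^sup>+\<omega>. ennreal (exp (- l * (\<Sum>j<n. (Z j \<omega>)\<^sup>2))) \<partial>M)
      = (\<integral>\<^sup>+\<omega>. (\<Prod>j<n. ennreal (exp (- l * (Z j \<omega>)\<^sup>2))) \<partial>M)"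
    by (simp add: exp_sum sum_distrib_left prod_ennreal)
  also have "\<dots> = (\<Prod>j<n. \<integral>\<^sup>+\<omega>. ennreal (exp (- l * (Z j \<omega>)\<^sup>2)) \<partial>M)"
    by (intro indep_vars_nn_integral indep_vars_compose2[OF ind]) auto
  also have "\<dots> = (\<Prod>j<n. ennreal (1 / sqrt (1 + 2 * l)))"
  proof (rule prod.cong[OF refl])
    fix j assume "j \<in> {..<n}"
    then have "(\<integral>\<^sup>+\<omega>. ennreal (exp (- l * (Z j \<omega>)\<^sup>2)) \<partial>M)
        = (\<integral>\<^sup>+x. ennreal (std_normal_density x) * ennreal (exp (- l * x\<^sup>2)) \<partial>lborel)"
      using std by (intro distributed_nn_integral[symmetric]) auto
    also have "\<dots> = ennreal (1 / sqrt (1 + 2 * l))"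
      using nn_integral_std_normal_exp_neg_square[OF l] by (simp add: ennreal_mult[symmetric])
    finally show "(\<integral>\<^sup>+\<omega>. ennreal (exp (- l * (Z j \<omega>)\<^sup>2)) \<partial>M) = ennreal (1 / sqrt (1 + 2 * l))" .
  qed
  finally show ?thesis using l by (simp add: ennreal_power)
qed

text \<open>\<open>l\<close> is the Chernoff parameter for the event that a chi-square variable with \<open>n\<close> degrees
  of freedom is at most \<open>m\<close>; the estimate rests on \<open>ln (1 + x) \<ge> x - x\<^sup>2\<close>.\<close>

lemma chi_square_chernoff_bound:
  fixes n :: nat and t :: real
  assumes t0: "0 < t" and tn: "t < sqrt n"
  defines "m \<equiv> (sqrt (real n) - t)\<^sup>2"
  defines "l \<equiv> (real n - m) / (4 * real n)"
  shows "l > 0" "exp (l * m) * (1 / sqrt (1 + 2 * l)) ^ n \<le> exp (- (t\<^sup>2 / 8))"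
proof -
  have n0: "n > 0" using t0 tn by (cases n) auto
  define a where "a = real n - m"
  have a_eq: "a = 2 * t * sqrt n - t\<^sup>2" unfolding a_def m_def by (simp add: power2_diff)
  have "t * t \<le> t * sqrt n" using tn t0 by (intro mult_left_mono) auto
  then have a_ge: "a \<ge> t * sqrt n" using a_eq by (simp add: power2_eq_square)
  have a_le: "a \<le> n" unfolding a_def m_def by simp
  have "t * sqrt n > 0" using t0 n0 by simp
  then have a_pos: "a > 0" using a_ge by linarith
  have l_eq: "l = a / (4 * real n)" by (simp add: l_def a_def)
  show lpos: "l > 0" using a_pos n0 l_eq by simp
  have l_le: "2 * l \<le> 1" using a_le n0 unfolding l_eq by (simp add: field_simps)
  have "1 / sqrt (1 + 2 * l) = exp (- (ln (1 + 2 * l) / 2))"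
    using lpos powr_half_sqrt[of "1 + 2 * l"] by (simp add: powr_def exp_minus inverse_eq_divide)
  also have "\<dots> \<le> exp (- l + 2 * l\<^sup>2)"
    using ln_one_plus_pos_lower_bound[of "2 * l"] lpos l_le by (simp add: power2_eq_square)
  finally have "(1 / sqrt (1 + 2 * l)) ^ n \<le> exp (- l + 2 * l\<^sup>2) ^ n"
    using lpos by (intro power_mono) auto
  also have "\<dots> = exp (n * (- l + 2 * l\<^sup>2))" by (simp add: exp_of_nat_mult)
  finally have "exp (l * m) * (1 / sqrt (1 + 2 * l)) ^ n \<le> exp (l * m + n * (- l + 2 * l\<^sup>2))"
    by (simp add: mult_exp_exp[symmetric])
  also have "l * m + n * (- l + 2 * l\<^sup>2) = - (a\<^sup>2 / (8 * n))"
    using n0 unfolding l_eq by (simp add: a_def field_simps power2_eq_square)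
  also have "exp (- (a\<^sup>2 / (8 * n))) \<le> exp (- (t\<^sup>2 / 8))"
  proof -
    have "(t * sqrt n)\<^sup>2 \<le> a\<^sup>2" using a_ge t0 by (intro power_mono) auto
    then have "t\<^sup>2 * n \<le> a\<^sup>2" by (simp add: power_mult_distrib)
    then show ?thesis using n0 by (simp add: divide_simps)
  qed
  finally show "exp (l * m) * (1 / sqrt (1 + 2 * l)) ^ n \<le> exp (- (t\<^sup>2 / 8))" .
qed

lemma (in prob_space) sum_squares_std_normal_lower_tail:
  fixes Z :: "nat \<Rightarrow> 'a \<Rightarrow> real"
  assumes ind: "indep_vars (\<lambda>_. borel) Z {..<n}"
    and std: "\<And>j. j < n \<Longrightarrow> distributed M lborel (Z j) std_normal_density"
    and t: "t \<ge> 0"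
  shows "1 - exp (- (t\<^sup>2 / 8)) \<le> prob {\<omega>\<in>space M. (max 0 (sqrt n - t))\<^sup>2 \<le> (\<Sum>j<n. (Z j \<omega>)\<^sup>2)}"
proof -
  let ?S = "\<lambda>\<omega>. \<Sum>j<n. (Z j \<omega>)\<^sup>2"
  have [measurable]: "Z j \<in> borel_measurable M" if "j < n" for j
    using ind that unfolding indep_vars_def by auto
  consider "t = 0" | "t \<ge> sqrt n" | "0 < t" "t < sqrt n" using t by linarith
  then show ?thesis
  proof cases
    case 2
    then have "{\<omega>\<in>space M. (max 0 (sqrt n - t))\<^sup>2 \<le> ?S \<omega>} = space M"
      by (auto simp: max_def intro!: sum_nonneg)
    then show ?thesis using prob_space by simp
  next
    case 3
    define m where "m = (sqrt (real n) - t)\<^sup>2"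
    define l where "l = (real n - m) / (4 * real n)"
    note chernoff = chi_square_chernoff_bound[OF 3, folded m_def, folded l_def]
    have "emeasure M {\<omega>\<in>space M. ?S \<omega> \<le> m}
        \<le> ennreal (exp (l * m)) * (\<integral>\<^sup>+\<omega>. ennreal (exp (- l * ?S \<omega>)) * indicator (space M) \<omega> \<partial>M)"
      using chernoff by (intro Chernoff_ineq_nn_integral_le) auto
    also have "(\<integral>\<^sup>+\<omega>. ennreal (exp (- l * ?S \<omega>)) * indicator (space M) \<omega> \<partial>M)
        = (\<integral>\<^sup>+\<omega>. ennreal (exp (- l * ?S \<omega>)) \<partial>M)"
      by (intro nn_integral_cong) simp
    also have "\<dots> = ennreal ((1 / sqrt (1 + 2 * l)) ^ n)"
      by (rule nn_integral_exp_neg_sum_squares_std_normal[OF ind std less_imp_le[OF chernoff(1)]])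
    finally have "emeasure M {\<omega>\<in>space M. ?S \<omega> \<le> m} \<le> ennreal (exp (l * m) * (1 / sqrt (1 + 2 * l)) ^ n)"
      using chernoff(1) by (simp add: ennreal_mult)
    then have "prob {\<omega>\<in>space M. ?S \<omega> \<le> m} \<le> exp (- (t\<^sup>2 / 8))"
      using chernoff(1,2) by (simp add: emeasure_eq_measure)
    moreover have "prob (space M - {\<omega>\<in>space M. ?S \<omega> \<le> m})
        \<le> prob {\<omega>\<in>space M. (max 0 (sqrt n - t))\<^sup>2 \<le> ?S \<omega>}"
      using 3 by (intro finite_measure_mono) (auto simp: m_def)
    moreover have "prob (space M - {\<omega>\<in>space M. ?S \<omega> \<le> m}) = 1 - prob {\<omega>\<in>space M. ?S \<omega> \<le> m}"
      by (rule prob_compl) auto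
    ultimately show ?thesis by linarith
  qed simp
qed

lemma indep_vars_PiM_components:
  fixes M :: "'i \<Rightarrow> real measure"
  assumes prob: "\<And>i. i \<in> K \<Longrightarrow> prob_space (M i)" and borel: "\<And>i. i \<in> K \<Longrightarrow> sets (M i) = sets borel"
    and K: "K \<noteq> {}"
  shows "prob_space.indep_vars (PiM K M) (\<lambda>_. borel) (\<lambda>k \<omega>. \<omega> k) K"
proof -
  interpret prob_space "PiM K M" by (rule prob_space_PiM) (use prob in auto)
  have rv: "random_variable borel (\<lambda>\<omega>. \<omega> k)" for k
  proof (cases "k \<in> K")
    case True
    then show ?thesis using borel by (metis measurable_component_singleton measurable_cong_sets)
  next
    case False
    then have "\<And>\<omega>. \<omega> \<in> space (PiM K M) \<Longrightarrow> \<omega> k = undefined"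
      by (auto simp: space_PiM PiE_def extensional_def)
    then show ?thesis by (subst measurable_cong[where g="\<lambda>_. undefined"]) auto
  qed
  have component: "distr (PiM K M) borel (\<lambda>\<omega>. \<omega> k) = M k" if "k \<in> K" for k
  proof -
    have "distr (PiM K M) borel (\<lambda>\<omega>. \<omega> k) = distr (PiM K M) (M k) (\<lambda>\<omega>. \<omega> k)"
      by (rule distr_cong) (use borel that in auto)
    also have "\<dots> = M k" by (rule distr_PiM_component) (use prob that in auto)
    finally show ?thesis .
  qed
  have "distr (PiM K M) (PiM K (\<lambda>_. borel)) (\<lambda>\<omega>. \<lambda>i\<in>K. \<omega> i) = distr (PiM K M) (PiM K M) (\<lambda>\<omega>. \<omega>)"
    by (rule distr_cong) (auto simp: borel space_PiM PiE_def intro!: sets_PiM_cong)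
  also have "\<dots> = PiM K (\<lambda>k. distr (PiM K M) borel (\<lambda>\<omega>. \<omega> k))"
    by (simp add: component cong: PiM_cong)
  finally show ?thesis by (subst indep_vars_iff_distr_eq_PiM[OF K rv])
qed

lemma distributed_PiM_component_normal:
  assumes "k \<in> K" "\<sigma> > 0"
  shows "distributed (PiM K (\<lambda>_. density lborel (normal_density 0 \<sigma>))) lborel (\<lambda>\<omega>. \<omega> k) (normal_density 0 \<sigma>)"
proof -
  let ?D = "density lborel (normal_density 0 \<sigma>)"
  have "distr (PiM K (\<lambda>_. ?D)) lborel (\<lambda>\<omega>. \<omega> k) = distr (PiM K (\<lambda>_. ?D)) ?D (\<lambda>\<omega>. \<omega> k)"
    by (rule distr_cong) auto
  also have "\<dots> = ?D" by (rule distr_PiM_component) (use assms prob_space_normal_density in auto)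
  finally show ?thesis
    using assms measurable_component_singleton[of k K "\<lambda>_. ?D"]
    by (simp add: distributed_def cong: measurable_cong_sets)
qed

lemma (in prob_space) indep_vars_compose_blocks:
  assumes ind: "indep_vars M' X I" and blocks: "\<And>j. j \<in> L \<Longrightarrow> B j \<subseteq> I" "disjoint_family_on B L"
    and g: "\<And>j. j \<in> L \<Longrightarrow> g j \<in> measurable (PiM (B j) M') (N j)"
    and Y: "\<And>j \<omega>. j \<in> L \<Longrightarrow> Y j \<omega> = g j (restrict (\<lambda>i. X i \<omega>) (B j))"
  shows "indep_vars N Y L"
  using indep_vars_compose2[OF indep_vars_restrict[OF ind blocks] g]
  by (rule indep_vars_cong[THEN iffD1, rotated 3]) (auto simp: Y)

lemma distributed_PiM_normal_linear_combination:
  fixes c :: "'i \<Rightarrow> real" and \<kappa> :: "'i \<Rightarrow> 'k"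
  assumes \<sigma>: "\<sigma> > 0" and I: "finite I" "inj_on \<kappa> I" "\<kappa> ` I \<subseteq> K" and c: "\<exists>i\<in>I. c i \<noteq> 0"
  shows "distributed (PiM K (\<lambda>_. density lborel (normal_density 0 \<sigma>))) lborel
           (\<lambda>\<omega>. \<Sum>i\<in>I. c i * \<omega> (\<kappa> i)) (normal_density 0 (\<sigma> * sqrt (\<Sum>i\<in>I. (c i)\<^sup>2)))"
proof -
  define P where "P = PiM K (\<lambda>_. density lborel (normal_density 0 \<sigma>))"
  interpret P: prob_space P
    unfolding P_def by (rule prob_space_PiM) (use prob_space_normal_density \<sigma> in auto)
  define J where "J = {i\<in>I. c i \<noteq> 0}"
  have J: "finite J" "J \<noteq> {}" using I c by (auto simp: J_def)
  have "K \<noteq> {}" using I J by (auto simp: J_def)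
  then have "P.indep_vars (\<lambda>_. borel) (\<lambda>k \<omega>. \<omega> k) K"
    unfolding P_def by (intro indep_vars_PiM_components) (use \<sigma> prob_space_normal_density in auto)
  then have ind: "P.indep_vars (\<lambda>_. borel) (\<lambda>i \<omega>. c i * \<omega> (\<kappa> i)) J"
    by (rule P.indep_vars_compose_blocks[where B="\<lambda>i. {\<kappa> i}" and g="\<lambda>i f. c i * f (\<kappa> i)"])
       (use I in \<open>auto simp: J_def disjoint_family_on_def inj_on_def\<close>)
  have normal: "distributed P lborel (\<lambda>\<omega>. c i * \<omega> (\<kappa> i)) (normal_density 0 (\<bar>c i\<bar> * \<sigma>))"
    if "i \<in> J" for i
  proof -
    have "distributed P lborel (\<lambda>\<omega>. \<omega> (\<kappa> i)) (normal_density 0 \<sigma>)"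
      unfolding P_def by (rule distributed_PiM_component_normal) (use that I \<sigma> in \<open>auto simp: J_def\<close>)
    from P.normal_density_affine[OF this \<sigma>, of "c i" 0] that show ?thesis by (simp add: J_def)
  qed
  have "distributed P lborel (\<lambda>\<omega>. \<Sum>i\<in>J. c i * \<omega> (\<kappa> i)) (normal_density 0 (sqrt (\<Sum>i\<in>J. (\<bar>c i\<bar> * \<sigma>)\<^sup>2)))"
    using P.sum_indep_normal[OF J ind, of "\<lambda>i. \<bar>c i\<bar> * \<sigma>" "\<lambda>_. 0"] normal \<sigma> by (auto simp: J_def)
  moreover have "(\<Sum>i\<in>J. c i * \<omega> (\<kappa> i)) = (\<Sum>i\<in>I. c i * \<omega> (\<kappa> i))" for \<omega>
    using I by (intro sum.mono_neutral_left) (auto simp: J_def)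
  moreover have "sqrt (\<Sum>i\<in>J. (\<bar>c i\<bar> * \<sigma>)\<^sup>2) = \<sigma> * sqrt (\<Sum>i\<in>I. (c i)\<^sup>2)"
  proof -
    have "(\<Sum>i\<in>J. (\<bar>c i\<bar> * \<sigma>)\<^sup>2) = \<sigma>\<^sup>2 * (\<Sum>i\<in>I. (c i)\<^sup>2)"
      using I by (simp add: power_mult_distrib sum_distrib_left mult.commute J_def
          sum.mono_neutral_left[of I J "\<lambda>i. (c i)\<^sup>2", symmetric])
    then show ?thesis using \<sigma> by (simp add: real_sqrt_mult)
  qed
  ultimately show ?thesis by (simp add: P_def)
qed

lemma gaussian_vector_norm_lower_tail:
  fixes N :: nat
  assumes "N \<ge> 1" "u \<ge> 0"
  defines "B \<equiv> PiM {..<N} (\<lambda>_. density lborel std_normal_density)"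
  shows "1 - exp (- (u\<^sup>2 / 8)) \<le> measure B {w \<in> space B. (max 0 (sqrt N - u))\<^sup>2 \<le> (\<Sum>i<N. (w i)\<^sup>2)}"
proof -
  interpret B: prob_space B unfolding B_def by (rule prob_space_PiM) (use prob_space_normal_density in auto)
  show ?thesis
  proof (rule B.sum_squares_std_normal_lower_tail)
    show "B.indep_vars (\<lambda>_. borel) (\<lambda>i w. w i) {..<N}"
      unfolding B_def
      by (rule indep_vars_PiM_components) (use prob_space_normal_density assms in \<open>auto simp: lessThan_empty_iff\<close>)
    show "distributed B lborel (\<lambda>w. w i) std_normal_density" if "i < N" for i
      unfolding B_def using distributed_PiM_component_normal[of i "{..<N}" 1] that by simp
  qed (use assms in simp)
qed

lemma gaussian_matrix_transpose_apply_lower_tail: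
  fixes N d :: nat and w :: "nat \<Rightarrow> real"
  assumes \<sigma>: "\<sigma> > 0" and w: "(\<Sum>i<N. (w i)\<^sup>2) > 0" and t: "t \<ge> 0" and d: "d \<ge> 1"
  defines "A \<equiv> PiM ({..<N} \<times> {..<d}) (\<lambda>_. density lborel (normal_density 0 \<sigma>))"
  shows "1 - exp (- (t\<^sup>2 / 8)) \<le> measure A {W \<in> space A.
     \<sigma>\<^sup>2 * (\<Sum>i<N. (w i)\<^sup>2) * (max 0 (sqrt d - t))\<^sup>2 \<le> (\<Sum>j<d. (\<Sum>i<N. w i * W (i, j))\<^sup>2)}"
proof -
  interpret A: prob_space A
    unfolding A_def by (rule prob_space_PiM) (use \<sigma> prob_space_normal_density in auto)
  have "N \<ge> 1" using w by (cases N) auto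
  then have indA: "A.indep_vars (\<lambda>_. borel) (\<lambda>k W. W k) ({..<N} \<times> {..<d})"
    unfolding A_def
    by (intro indep_vars_PiM_components) (use \<sigma> prob_space_normal_density d in \<open>auto simp: lessThan_empty_iff\<close>)
  define s where "s = \<sigma> * sqrt (\<Sum>i<N. (w i)\<^sup>2)"
  have s: "s > 0" using \<sigma> w by (simp add: s_def)
  define Z where "Z j W = (\<Sum>i<N. w i * W (i, j)) / s" for j :: nat and W :: "nat \<times> nat \<Rightarrow> real"
  have indZ: "A.indep_vars (\<lambda>_. borel) Z {..<d}"
  proof (rule A.indep_vars_compose_blocks[OF indA, where B="\<lambda>j. {..<N} \<times> {j}"
        and g="\<lambda>j f. (\<Sum>i<N. w i * f (i, j)) / s"])
    fix j assume "j \<in> {..<d}"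
    have "(\<lambda>f. f (i, j)) \<in> borel_measurable (PiM ({..<N} \<times> {j}) (\<lambda>_. borel))" if "i < N" for i
      using that by (intro measurable_component_singleton) auto
    then show "(\<lambda>f. (\<Sum>i<N. w i * f (i, j)) / s) \<in> borel_measurable (PiM ({..<N} \<times> {j}) (\<lambda>_. borel))"
      by (intro borel_measurable_divide borel_measurable_sum borel_measurable_times) auto
  qed (auto simp: Z_def disjoint_family_on_def)
  have stdZ: "distributed A lborel (Z j) std_normal_density" if "j < d" for j
  proof -
    have "distributed A lborel (\<lambda>W. \<Sum>i<N. w i * W (i, j)) (normal_density 0 s)"
      unfolding A_def s_def
      by (rule distributed_PiM_normal_linear_combination) (use \<sigma> w that in \<open>auto simp: inj_on_def intro: ccontr\<close>)
    then show ?thesis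
      using A.normal_standard_normal_convert[OF s] by (simp add: Z_def[abs_def])
  qed
  have "(\<Sum>j<d. (Z j W)\<^sup>2) = (\<Sum>j<d. (\<Sum>i<N. w i * W (i, j))\<^sup>2) / s\<^sup>2" for W
    unfolding Z_def power_divide by (rule sum_divide_distrib[symmetric])
  moreover have "\<sigma>\<^sup>2 * (\<Sum>i<N. (w i)\<^sup>2) = s\<^sup>2"
    using w by (simp add: s_def power_mult_distrib)
  ultimately have "{W \<in> space A. (max 0 (sqrt d - t))\<^sup>2 \<le> (\<Sum>j<d. (Z j W)\<^sup>2)} = {W \<in> space A.
      \<sigma>\<^sup>2 * (\<Sum>i<N. (w i)\<^sup>2) * (max 0 (sqrt d - t))\<^sup>2 \<le> (\<Sum>j<d. (\<Sum>i<N. w i * W (i, j))\<^sup>2)}"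
    using s by (auto simp: le_divide_eq mult.commute)
  then show ?thesis using A.sum_squares_std_normal_lower_tail[OF indZ stdZ t] by simp
qed

lemma abs_relu_diff_le: "\<bar>relu a - relu b\<bar> \<le> \<bar>a - b\<bar>"
  by (simp add: relu_def max_def)

lemma abs_relu_odd_part_le: "\<bar>relu (p + b) - relu (- p + b) - p\<bar> \<le> \<bar>b\<bar>"
  by (auto simp: relu_def max_def abs_if)

lemma euclid_dist_eq_L2_set: "euclid_dist d x y = L2_set (\<lambda>j. x j - y j) {..<d}"
  by (simp add: euclid_dist_def L2_set_def)

lemma euclid_dist_pos:
  assumes "x \<in> Rd d" "y \<in> Rd d" "x \<noteq> y"
  shows "euclid_dist d x y > 0"
proof -
  obtain j where j: "x j \<noteq> y j" using assms(3) by auto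
  with assms(1,2) have "j < d" by (auto simp: Rd_def intro: ccontr)
  then have "(x j - y j)\<^sup>2 \<le> (\<Sum>j<d. (x j - y j)\<^sup>2)"
    by (intro member_le_sum) auto
  moreover have "0 < (x j - y j)\<^sup>2" using j by simp
  ultimately have "0 < (\<Sum>j<d. (x j - y j)\<^sup>2)" by linarith
  then show ?thesis by (simp add: euclid_dist_def)
qed

lemma shallow_net_lipschitz:
  "\<bar>shallow_net N d W0 W1 b0 b1 x - shallow_net N d W0 W1 b0 b1 y\<bar>
     \<le> (\<Sum>i<N. \<bar>W1 i\<bar> * L2_set (\<lambda>j. W0 (i, j)) {..<d}) * euclid_dist d x y"
proof -
  let ?h = "\<lambda>x i. relu ((\<Sum>j<d. W0 (i, j) * x j) + b0 i)"
  have "\<bar>?h x i - ?h y i\<bar> \<le> L2_set (\<lambda>j. W0 (i, j)) {..<d} * euclid_dist d x y" for i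
  proof -
    have "\<bar>?h x i - ?h y i\<bar> \<le> \<bar>(\<Sum>j<d. W0 (i, j) * x j) - (\<Sum>j<d. W0 (i, j) * y j)\<bar>"
      by (rule order_trans[OF abs_relu_diff_le]) simp
    also have "\<dots> = \<bar>\<Sum>j<d. W0 (i, j) * (x j - y j)\<bar>"
      by (simp add: sum_subtractf right_diff_distrib)
    also have "\<dots> \<le> (\<Sum>j<d. \<bar>W0 (i, j)\<bar> * \<bar>x j - y j\<bar>)"
      by (rule order_trans[OF sum_abs]) (simp add: abs_mult)
    also have "\<dots> \<le> L2_set (\<lambda>j. W0 (i, j)) {..<d} * euclid_dist d x y"
      unfolding euclid_dist_eq_L2_set by (rule L2_set_mult_ineq)
    finally show ?thesis .
  qed
  then have "\<bar>W1 i * (?h x i - ?h y i)\<bar> \<le> \<bar>W1 i\<bar> * L2_set (\<lambda>j. W0 (i, j)) {..<d} * euclid_dist d x y" for i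
    unfolding abs_mult mult.assoc by (rule mult_left_mono) auto
  then have "\<bar>\<Sum>i<N. W1 i * (?h x i - ?h y i)\<bar> \<le> (\<Sum>i<N. \<bar>W1 i\<bar> * L2_set (\<lambda>j. W0 (i, j)) {..<d} * euclid_dist d x y)"
    by (intro order_trans[OF sum_abs] sum_mono)
  then show ?thesis
    by (simp add: shallow_net_def sum_subtractf[symmetric] right_diff_distrib sum_distrib_right)
qed

definition lip_quotients :: "nat \<Rightarrow> ((nat \<Rightarrow> real) \<Rightarrow> real) \<Rightarrow> real set" where
  "lip_quotients d f = {\<bar>f x - f y\<bar> / euclid_dist d x y | x y. x \<in> Rd d \<and> y \<in> Rd d \<and> x \<noteq> y}"

lemma lip_const_eq_Sup_lip_quotients: "lip_const d f = Sup (lip_quotients d f)"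
  by (simp add: lip_const_def lip_quotients_def)

lemma lip_quotients_nonempty:
  assumes "d \<ge> 1"
  shows "lip_quotients d f \<noteq> {}"
proof -
  let ?e = "\<lambda>j::nat. if j = 0 then (1::real) else 0"
  have "?e \<in> Rd d" "(\<lambda>_. 0) \<in> Rd d" "?e \<noteq> (\<lambda>_. 0)" using assms by (auto simp: Rd_def fun_eq_iff)
  then show ?thesis unfolding lip_quotients_def by blast
qed

lemma bdd_above_lip_quotients_shallow_net: "bdd_above (lip_quotients d (shallow_net N d W0 W1 b0 b1))"
proof (rule bdd_aboveI)
  fix q assume "q \<in> lip_quotients d (shallow_net N d W0 W1 b0 b1)"
  then obtain x y where xy: "x \<in> Rd d" "y \<in> Rd d" "x \<noteq> y"
    and q: "q = \<bar>shallow_net N d W0 W1 b0 b1 x - shallow_net N d W0 W1 b0 b1 y\<bar> / euclid_dist d x y"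
    unfolding lip_quotients_def by blast
  show "q \<le> (\<Sum>i<N. \<bar>W1 i\<bar> * L2_set (\<lambda>j. W0 (i, j)) {..<d})"
    using euclid_dist_pos[OF xy] shallow_net_lipschitz[of N d W0 W1 b0 b1 x y]
    by (simp add: q divide_le_eq)
qed

lemma lip_const_shallow_net_ge_quotient:
  assumes "x \<in> Rd d" "y \<in> Rd d" "x \<noteq> y"
  shows "\<bar>shallow_net N d W0 W1 b0 b1 x - shallow_net N d W0 W1 b0 b1 y\<bar> / euclid_dist d x y
    \<le> lip_const d (shallow_net N d W0 W1 b0 b1)"
  unfolding lip_const_eq_Sup_lip_quotients
  by (rule cSup_upper[OF _ bdd_above_lip_quotients_shallow_net]) (use assms in \<open>auto simp: lip_quotients_def\<close>)

lemma lip_const_shallow_net_nonneg: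
  assumes "d \<ge> 1"
  shows "0 \<le> lip_const d (shallow_net N d W0 W1 b0 b1)"
proof -
  obtain q where "q \<in> lip_quotients d (shallow_net N d W0 W1 b0 b1)"
    using lip_quotients_nonempty[OF assms] by blast
  moreover from this have "q \<ge> 0"
    unfolding lip_quotients_def euclid_dist_def by (auto intro!: divide_nonneg_nonneg sum_nonneg)
  ultimately show ?thesis
    unfolding lip_const_eq_Sup_lip_quotients by (intro cSup_upper2[OF _ _ bdd_above_lip_quotients_shallow_net])
qed

text \<open>Since \<open>relu z - relu (- z) = z\<close>, at the points \<open>\<plusminus>s v\<close> the biases only contribute a bounded
  error, while the linear part grows like \<open>s\<close>.\<close>

lemma lip_const_shallow_net_ge_antipodal:
  fixes N d :: nat and W0 :: "nat \<times> nat \<Rightarrow> real" and W1 b0 :: "nat \<Rightarrow> real" and b1 s :: real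
  defines "v \<equiv> \<lambda>j. \<Sum>i<N. W1 i * W0 (i, j)"
  defines "V \<equiv> sqrt (\<Sum>j<d. (v j)\<^sup>2)"
  assumes s: "s > 0" and V: "V > 0"
  shows "V / 2 - (\<Sum>i<N. \<bar>W1 i\<bar> * \<bar>b0 i\<bar>) / (2 * s * V) \<le> lip_const d (shallow_net N d W0 W1 b0 b1)"
proof -
  define K where "K = (\<Sum>i<N. \<bar>W1 i\<bar> * \<bar>b0 i\<bar>)"
  define f where "f = shallow_net N d W0 W1 b0 b1"
  define a where "a i = (\<Sum>j<d. W0 (i, j) * v j)" for i
  define x where "x j = (if j < d then s * v j else 0)" for j
  define y where "y j = (if j < d then - (s * v j) else 0)" for j
  have xy: "x \<in> Rd d" "y \<in> Rd d" by (auto simp: Rd_def x_def y_def)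
  have dist: "euclid_dist d x y = 2 * s * V"
  proof -
    have "(\<Sum>j<d. (x j - y j)\<^sup>2) = (2 * s)\<^sup>2 * (\<Sum>j<d. (v j)\<^sup>2)"
      by (simp add: x_def y_def sum_distrib_left power2_eq_square algebra_simps)
    then show ?thesis using s by (simp add: euclid_dist_def V_def real_sqrt_mult)
  qed
  then have "x \<noteq> y" using s V by (auto simp: euclid_dist_def)
  have linear_part: "(\<Sum>i<N. W1 i * a i) = V\<^sup>2"
  proof -
    have "(\<Sum>i<N. W1 i * a i) = (\<Sum>j<d. \<Sum>i<N. W1 i * W0 (i, j) * v j)"
      by (simp add: a_def sum_distrib_left mult.assoc sum.swap[of _ "{..<N}"])
    also have "\<dots> = (\<Sum>j<d. (v j)\<^sup>2)"
      by (simp add: v_def power2_eq_square sum_distrib_right)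
    finally show ?thesis by (simp add: V_def sum_nonneg)
  qed
  have "f x - f y = s * V\<^sup>2 + (\<Sum>i<N. W1 i * (relu (s * a i + b0 i) - relu (- (s * a i) + b0 i) - s * a i))"
    by (simp add: f_def shallow_net_def x_def y_def a_def sum_distrib_left sum_negf algebra_simps
        sum_subtractf[symmetric] sum.distrib[symmetric] linear_part[symmetric] if_distrib cong: if_cong)
  moreover have "\<bar>\<Sum>i<N. W1 i * (relu (s * a i + b0 i) - relu (- (s * a i) + b0 i) - s * a i)\<bar> \<le> K"
    unfolding K_def using abs_relu_odd_part_le
    by (intro order_trans[OF sum_abs] sum_mono) (simp add: abs_mult mult_left_mono)
  ultimately have "s * V\<^sup>2 - K \<le> \<bar>f x - f y\<bar>" by linarith
  then have "(s * V\<^sup>2 - K) / (2 * s * V) \<le> \<bar>f x - f y\<bar> / euclid_dist d x y"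
    unfolding dist using s V by (intro divide_right_mono) auto
  also have "\<dots> \<le> lip_const d f"
    unfolding f_def by (rule lip_const_shallow_net_ge_quotient[OF xy \<open>x \<noteq> y\<close>])
  finally show ?thesis using s V by (simp add: K_def f_def field_simps power2_eq_square)
qed

lemma lip_const_shallow_net_ge_half_norm:
  assumes d: "d \<ge> 1"
  shows "sqrt (\<Sum>j<d. (\<Sum>i<N. W1 i * W0 (i, j))\<^sup>2) / 2 \<le> lip_const d (shallow_net N d W0 W1 b0 b1)"
proof -
  define V where "V = sqrt (\<Sum>j<d. (\<Sum>i<N. W1 i * W0 (i, j))\<^sup>2)"
  define K where "K = (\<Sum>i<N. \<bar>W1 i\<bar> * \<bar>b0 i\<bar>)"
  have "V \<ge> 0" by (simp add: V_def sum_nonneg)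
  show ?thesis
  proof (cases "V = 0")
    case True
    then show ?thesis using lip_const_shallow_net_nonneg[OF d] by (simp add: V_def)
  next
    case False
    with \<open>V \<ge> 0\<close> have V: "V > 0" by simp
    have "((\<lambda>s. V / 2 - K / (2 * V) * inverse s) \<longlongrightarrow> V / 2 - K / (2 * V) * 0) at_top"
      by (intro tendsto_intros tendsto_inverse_0_at_top filterlim_ident)
    moreover have "\<forall>\<^sub>F s in at_top. V / 2 - K / (2 * V) * inverse s \<le> lip_const d (shallow_net N d W0 W1 b0 b1)"
      using eventually_gt_at_top[of 0]
    proof eventually_elim
      case (elim s)
      then show ?case
        using lip_const_shallow_net_ge_antipodal[of s W1 W0 N d b0 b1] V
        by (simp add: V_def K_def field_simps)
    qed
    ultimately show ?thesis
      unfolding V_def by (intro tendsto_le[OF trivial_limit_at_top_linorder tendsto_const]) auto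
  qed
qed

lemma tendsto_relu [tendsto_intros]: "(g \<longlongrightarrow> l) F \<Longrightarrow> ((\<lambda>k. relu (g k)) \<longlongrightarrow> relu l) F"
  unfolding relu_def by (intro tendsto_intros)

lemma tendsto_shallow_net:
  assumes "\<And>j. ((\<lambda>k. X k j) \<longlongrightarrow> x j) F"
  shows "((\<lambda>k. shallow_net N d W0 W1 b0 b1 (X k)) \<longlongrightarrow> shallow_net N d W0 W1 b0 b1 x) F"
  unfolding shallow_net_def by (intro tendsto_intros assms)

lemma tendsto_euclid_dist:
  assumes "\<And>j. ((\<lambda>k. X k j) \<longlongrightarrow> x j) F" "\<And>j. ((\<lambda>k. Y k j) \<longlongrightarrow> y j) F"
  shows "((\<lambda>k. euclid_dist d (X k) (Y k)) \<longlongrightarrow> euclid_dist d x y) F"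
  unfolding euclid_dist_def by (intro tendsto_intros assms)

text \<open>The event \<open>\<theta> \<le> lip_const d \<Phi>\<close> is measurable because the supremum may be taken over points
  with rational coordinates, which are indexed by the countable type \<open>rat list\<close>.\<close>

definition rat_vec :: "nat \<Rightarrow> rat list \<Rightarrow> nat \<Rightarrow> real" where
  "rat_vec d xs = (\<lambda>j. if j < d \<and> j < length xs then real_of_rat (xs ! j) else 0)"

definition rat_approx :: "nat \<Rightarrow> real \<Rightarrow> rat" where
  "rat_approx k z = of_int \<lfloor>z * real (Suc k)\<rfloor> / of_nat (Suc k)"

lemma rat_vec_in_Rd: "rat_vec d xs \<in> Rd d"
  by (simp add: rat_vec_def Rd_def)

lemma rat_approx_tendsto: "(\<lambda>k. real_of_rat (rat_approx k z)) \<longlonglongrightarrow> z"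
proof (rule tendsto_sandwich[of "\<lambda>k. z - inverse (real (Suc k))" _ _ "\<lambda>_. z"])
  have approx: "real_of_rat (rat_approx k z) = \<lfloor>z * real (Suc k)\<rfloor> / real (Suc k)" for k
    by (simp add: rat_approx_def of_rat_divide of_rat_of_nat_eq del: of_nat_Suc)
  show "\<forall>\<^sub>F k in sequentially. z - inverse (real (Suc k)) \<le> real_of_rat (rat_approx k z)"
  proof (intro always_eventually allI)
    fix k
    have "z * real (Suc k) - 1 \<le> \<lfloor>z * real (Suc k)\<rfloor>" by linarith
    then have "(z * real (Suc k) - 1) / real (Suc k) \<le> \<lfloor>z * real (Suc k)\<rfloor> / real (Suc k)"
      by (intro divide_right_mono) auto
    then show "z - inverse (real (Suc k)) \<le> real_of_rat (rat_approx k z)"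
      unfolding approx by (simp add: field_simps)
  qed
  show "\<forall>\<^sub>F k in sequentially. real_of_rat (rat_approx k z) \<le> z"
  proof (intro always_eventually allI)
    fix k
    have "\<lfloor>z * real (Suc k)\<rfloor> \<le> z * real (Suc k)" by linarith
    then have "\<lfloor>z * real (Suc k)\<rfloor> / real (Suc k) \<le> z * real (Suc k) / real (Suc k)"
      by (intro divide_right_mono) auto
    then show "real_of_rat (rat_approx k z) \<le> z" unfolding approx by simp
  qed
  show "(\<lambda>k. z - inverse (real (Suc k))) \<longlonglongrightarrow> z"
    using tendsto_diff[OF tendsto_const LIMSEQ_inverse_real_of_nat, of z] by simp
qed simp

lemma rat_vec_approx_tendsto:
  assumes "x \<in> Rd d"
  shows "(\<lambda>k. rat_vec d (map (\<lambda>j. rat_approx k (x j)) [0..<d]) j) \<longlonglongrightarrow> x j"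
  using assms by (cases "j < d") (simp_all add: rat_vec_def rat_approx_tendsto Rd_def)

lemma rational_pair_quotient_approx:
  assumes xy: "x \<in> Rd d" "y \<in> Rd d" "x \<noteq> y"
    and c: "c < \<bar>shallow_net N d W0 W1 b0 b1 x - shallow_net N d W0 W1 b0 b1 y\<bar> / euclid_dist d x y"
  shows "\<exists>p::rat list \<times> rat list. 0 < euclid_dist d (rat_vec d (fst p)) (rat_vec d (snd p)) \<and>
    c < \<bar>shallow_net N d W0 W1 b0 b1 (rat_vec d (fst p)) - shallow_net N d W0 W1 b0 b1 (rat_vec d (snd p))\<bar>
          / euclid_dist d (rat_vec d (fst p)) (rat_vec d (snd p))"
proof -
  let ?f = "shallow_net N d W0 W1 b0 b1"
  define X where "X k = rat_vec d (map (\<lambda>j. rat_approx k (x j)) [0..<d])" for k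
  define Y where "Y k = rat_vec d (map (\<lambda>j. rat_approx k (y j)) [0..<d])" for k
  have X: "\<And>j. (\<lambda>k. X k j) \<longlonglongrightarrow> x j" and Y: "\<And>j. (\<lambda>k. Y k j) \<longlonglongrightarrow> y j"
    unfolding X_def Y_def using xy by (simp_all add: rat_vec_approx_tendsto)
  have dist: "euclid_dist d x y > 0" by (rule euclid_dist_pos[OF xy])
  have "(\<lambda>k. euclid_dist d (X k) (Y k)) \<longlonglongrightarrow> euclid_dist d x y"
    by (rule tendsto_euclid_dist[OF X Y])
  moreover from this have "(\<lambda>k. \<bar>?f (X k) - ?f (Y k)\<bar> / euclid_dist d (X k) (Y k))
      \<longlonglongrightarrow> \<bar>?f x - ?f y\<bar> / euclid_dist d x y"
    using dist by (intro tendsto_intros tendsto_shallow_net X Y) auto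
  ultimately have "\<forall>\<^sub>F k in sequentially. 0 < euclid_dist d (X k) (Y k) \<and>
      c < \<bar>?f (X k) - ?f (Y k)\<bar> / euclid_dist d (X k) (Y k)"
    using dist c by (intro eventually_conj order_tendstoD(1)) auto
  then obtain k where "0 < euclid_dist d (X k) (Y k) \<and> c < \<bar>?f (X k) - ?f (Y k)\<bar> / euclid_dist d (X k) (Y k)"
    by (auto simp: eventually_sequentially)
  then show ?thesis unfolding X_def Y_def by (intro exI[of _ "(_, _)"]) auto
qed

lemma lip_const_shallow_net_ge_iff_rational:
  assumes d: "d \<ge> 1"
  shows "\<theta> \<le> lip_const d (shallow_net N d W0 W1 b0 b1) \<longleftrightarrow>
    (\<forall>n::nat. \<exists>p::rat list \<times> rat list. 0 < euclid_dist d (rat_vec d (fst p)) (rat_vec d (snd p)) \<and>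
        \<theta> - inverse (real (Suc n)) <
        \<bar>shallow_net N d W0 W1 b0 b1 (rat_vec d (fst p)) - shallow_net N d W0 W1 b0 b1 (rat_vec d (snd p))\<bar>
          / euclid_dist d (rat_vec d (fst p)) (rat_vec d (snd p)))"
  (is "?L \<longleftrightarrow> (\<forall>n. \<exists>p. ?P n p)")
proof
  let ?f = "shallow_net N d W0 W1 b0 b1"
  assume ?L
  show "\<forall>n. \<exists>p. ?P n p"
  proof
    fix n :: nat
    have "\<theta> - inverse (real (Suc n)) < Sup (lip_quotients d ?f)"
      using \<open>?L\<close> unfolding lip_const_eq_Sup_lip_quotients
      by (smt (verit) inverse_positive_iff_positive of_nat_0_less_iff zero_less_Suc)
    then obtain x y where "x \<in> Rd d" "y \<in> Rd d" "x \<noteq> y"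
      "\<theta> - inverse (real (Suc n)) < \<bar>?f x - ?f y\<bar> / euclid_dist d x y"
      using less_cSupD[OF lip_quotients_nonempty[OF d]] unfolding lip_quotients_def by blast
    then show "\<exists>p. ?P n p" by (rule rational_pair_quotient_approx)
  qed
next
  let ?f = "shallow_net N d W0 W1 b0 b1"
  assume approx: "\<forall>n. \<exists>p. ?P n p"
  show ?L
  proof (rule ccontr)
    assume "\<not> ?L"
    then obtain n where n: "inverse (real (Suc n)) < \<theta> - lip_const d ?f"
      using reals_Archimedean by (metis diff_gt_0_iff_gt not_le)
    obtain p where p: "?P n p" using approx by blast
    then have "rat_vec d (fst p) \<noteq> rat_vec d (snd p)" by (auto simp: euclid_dist_def)
    from lip_const_shallow_net_ge_quotient[OF rat_vec_in_Rd rat_vec_in_Rd this, of N W0 W1 b0 b1] p n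
    show False
      by linarith
  qed
qed

lemma borel_measurable_shallow_net:
  fixes W0 :: "'a \<Rightarrow> nat \<times> nat \<Rightarrow> real" and W1 b0 :: "'a \<Rightarrow> nat \<Rightarrow> real" and b1 :: "'a \<Rightarrow> real"
  assumes "\<And>i j. i < N \<Longrightarrow> j < d \<Longrightarrow> (\<lambda>\<omega>. W0 \<omega> (i, j)) \<in> borel_measurable M"
    and "\<And>i. i < N \<Longrightarrow> (\<lambda>\<omega>. W1 \<omega> i) \<in> borel_measurable M" "\<And>i. i < N \<Longrightarrow> (\<lambda>\<omega>. b0 \<omega> i) \<in> borel_measurable M"
    and "b1 \<in> borel_measurable M"
  shows "(\<lambda>\<omega>. shallow_net N d (W0 \<omega>) (W1 \<omega>) (b0 \<omega>) (b1 \<omega>) x) \<in> borel_measurable M"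
  unfolding shallow_net_def relu_def using assms by measurable

lemma sets_Collect_lip_const_shallow_net_ge:
  fixes W0 :: "'a \<Rightarrow> nat \<times> nat \<Rightarrow> real" and W1 b0 :: "'a \<Rightarrow> nat \<Rightarrow> real" and b1 :: "'a \<Rightarrow> real"
  assumes d: "d \<ge> 1"
    and "\<And>i j. i < N \<Longrightarrow> j < d \<Longrightarrow> (\<lambda>\<omega>. W0 \<omega> (i, j)) \<in> borel_measurable M"
    and "\<And>i. i < N \<Longrightarrow> (\<lambda>\<omega>. W1 \<omega> i) \<in> borel_measurable M" "\<And>i. i < N \<Longrightarrow> (\<lambda>\<omega>. b0 \<omega> i) \<in> borel_measurable M"
    and "b1 \<in> borel_measurable M"
  shows "{\<omega> \<in> space M. \<theta> \<le> lip_const d (shallow_net N d (W0 \<omega>) (W1 \<omega>) (b0 \<omega>) (b1 \<omega>))} \<in> sets M"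
proof -
  have net: "(\<lambda>\<omega>. shallow_net N d (W0 \<omega>) (W1 \<omega>) (b0 \<omega>) (b1 \<omega>) x) \<in> borel_measurable M" for x
    by (rule borel_measurable_shallow_net) (use assms in auto)
  show ?thesis
    unfolding lip_const_shallow_net_ge_iff_rational[OF d]
    by (intro sets.sets_Collect_countable_All sets.sets_Collect_countable_Ex sets.sets_Collect_conj
        sets.sets_Collect_const borel_measurable_less borel_measurable_const borel_measurable_divide
        borel_measurable_abs borel_measurable_diff net)
qed

lemma measure_pair_measure_ge_mult:
  assumes M1: "prob_space M1" and M2: "prob_space M2"
    and S: "S \<in> sets (M1 \<Otimes>\<^sub>M M2)" and E: "E \<in> sets M2"
    and p: "0 \<le> p" "\<And>y. y \<in> E \<Longrightarrow> p \<le> measure M1 ((\<lambda>x. (x, y)) -` S)"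
  shows "p * measure M2 E \<le> measure (M1 \<Otimes>\<^sub>M M2) S"
proof -
  interpret M1: prob_space M1 by (rule M1)
  interpret M2: prob_space M2 by (rule M2)
  interpret pair_prob_space M1 M2 ..
  have "ennreal p * emeasure M2 E = (\<integral>\<^sup>+y. ennreal p * indicator E y \<partial>M2)"
    using E by (simp add: nn_integral_cmult_indicator)
  also have "\<dots> \<le> (\<integral>\<^sup>+y. emeasure M1 ((\<lambda>x. (x, y)) -` S) \<partial>M2)"
    using p by (intro nn_integral_mono) (auto simp: indicator_def M1.emeasure_eq_measure)
  also have "\<dots> = emeasure (M1 \<Otimes>\<^sub>M M2) S"
    using S by (rule emeasure_pair_measure_alt2[symmetric])
  finally show ?thesis
    using p by (simp add: emeasure_eq_measure M2.emeasure_eq_measure ennreal_mult[symmetric] ennreal_le_iff)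
qed

lemma measure_pair_measure_Times_space:
  assumes "prob_space M2" "A \<in> sets M1"
  shows "measure (M1 \<Otimes>\<^sub>M M2) (A \<times> space M2) = measure M1 A"
proof -
  interpret M2: prob_space M2 by fact
  show ?thesis
    using M2.emeasure_pair_measure_Times[OF assms(2) sets.top] by (simp add: measure_def M2.emeasure_space_1)
qed

lemma prob_lip_const_shallow_net_ge_norm_outer_weights:
  fixes N d :: nat and W1 :: "nat \<Rightarrow> real"
  assumes \<sigma>: "\<sigma> > 0" and t: "t \<ge> 0" and d: "d \<ge> 1"
  defines "A \<equiv> PiM ({..<N} \<times> {..<d}) (\<lambda>_. density lborel (normal_density 0 \<sigma>))"
  shows "1 - exp (- (t\<^sup>2 / 8)) \<le> measure A {W0 \<in> space A.
     \<sigma> / 2 * sqrt (\<Sum>i<N. (W1 i)\<^sup>2) * max 0 (sqrt d - t) \<le> lip_const d (shallow_net N d W0 W1 b0 b1)}"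
    (is "_ \<le> measure A ?L")
proof -
  define r where "r = (\<Sum>i<N. (W1 i)\<^sup>2)"
  define mt where "mt = max 0 (sqrt d - t)"
  interpret A: prob_space A
    unfolding A_def by (rule prob_space_PiM) (use \<sigma> prob_space_normal_density in auto)
  show ?thesis
  proof (cases "r = 0")
    case True
    then show ?thesis using lip_const_shallow_net_nonneg[OF d] by (simp add: r_def A.prob_space)
  next
    case False
    then have "r > 0" by (simp add: r_def sum_nonneg order.not_eq_order_implies_strict)
    have "sqrt (\<sigma>\<^sup>2 * r * mt\<^sup>2) / 2 \<le> lip_const d (shallow_net N d W0 W1 b0 b1)"
      if "\<sigma>\<^sup>2 * r * mt\<^sup>2 \<le> (\<Sum>j<d. (\<Sum>i<N. W1 i * W0 (i, j))\<^sup>2)" for W0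
      using real_sqrt_le_mono[OF that] lip_const_shallow_net_ge_half_norm[OF d, of W1 W0 N b0 b1]
      by linarith
    moreover have "sqrt (\<sigma>\<^sup>2 * r * mt\<^sup>2) / 2 = \<sigma> / 2 * sqrt r * mt"
      using \<sigma> by (simp add: real_sqrt_mult mt_def)
    ultimately have "{W0 \<in> space A. \<sigma>\<^sup>2 * r * mt\<^sup>2 \<le> (\<Sum>j<d. (\<Sum>i<N. W1 i * W0 (i, j))\<^sup>2)} \<subseteq> ?L"
      by (auto simp: r_def mt_def)
    moreover have "?L \<in> sets A"
      unfolding A_def by (rule sets_Collect_lip_const_shallow_net_ge[OF d]) auto
    ultimately have "measure A {W0 \<in> space A. \<sigma>\<^sup>2 * r * mt\<^sup>2 \<le> (\<Sum>j<d. (\<Sum>i<N. W1 i * W0 (i, j))\<^sup>2)}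
        \<le> measure A ?L"
      by (intro A.finite_measure_mono)
    moreover have "1 - exp (- (t\<^sup>2 / 8))
        \<le> measure A {W0 \<in> space A. \<sigma>\<^sup>2 * r * mt\<^sup>2 \<le> (\<Sum>j<d. (\<Sum>i<N. W1 i * W0 (i, j))\<^sup>2)}"
      unfolding A_def r_def mt_def
      using gaussian_matrix_transpose_apply_lower_tail[OF \<sigma> _ t d, of W1] \<open>r > 0\<close> by (simp add: r_def)
    ultimately show ?thesis by linarith
  qed
qed

lemma prob_lip_const_shallow_net_ge_given_outer_layer:
  fixes N d :: nat and W1 :: "nat \<Rightarrow> real"
  assumes N: "N \<ge> 1" and d: "d \<ge> 1" and t: "t \<ge> 0"
    and W1: "(max 0 (sqrt N - u))\<^sup>2 \<le> (\<Sum>i<N. (W1 i)\<^sup>2)"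
  defines "A \<equiv> PiM ({..<N} \<times> {..<d}) (\<lambda>_. density lborel (normal_density 0 (sqrt (2 / real N))))"
  shows "1 - exp (- (t\<^sup>2 / 8)) \<le> measure A {W0 \<in> space A.
     1 / sqrt 2 * max 0 (1 - u / sqrt N) * max 0 (sqrt d - t) \<le> lip_const d (shallow_net N d W0 W1 b0 b1)}"
    (is "_ \<le> measure A ?L")
proof -
  define \<sigma> where "\<sigma> = sqrt (2 / real N)"
  have \<sigma>: "\<sigma> > 0" using N by (simp add: \<sigma>_def)
  interpret A: prob_space A
    unfolding A_def by (rule prob_space_PiM) (use \<sigma> prob_space_normal_density in \<open>auto simp: \<sigma>_def\<close>)
  let ?K = "{W0 \<in> space A. \<sigma> / 2 * sqrt (\<Sum>i<N. (W1 i)\<^sup>2) * max 0 (sqrt d - t)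
              \<le> lip_const d (shallow_net N d W0 W1 b0 b1)}"
  have "1 / sqrt 2 * max 0 (1 - u / sqrt N) = \<sigma> / 2 * max 0 (sqrt N - u)"
    using N by (auto simp: \<sigma>_def max_def field_simps real_sqrt_divide)
  moreover have "max 0 (sqrt N - u) \<le> sqrt (\<Sum>i<N. (W1 i)\<^sup>2)"
    using real_sqrt_le_mono[OF W1] by simp
  ultimately have "1 / sqrt 2 * max 0 (1 - u / sqrt N) \<le> \<sigma> / 2 * sqrt (\<Sum>i<N. (W1 i)\<^sup>2)"
    using \<sigma> by (simp add: mult_left_mono)
  then have "1 / sqrt 2 * max 0 (1 - u / sqrt N) * max 0 (sqrt d - t)
      \<le> \<sigma> / 2 * sqrt (\<Sum>i<N. (W1 i)\<^sup>2) * max 0 (sqrt d - t)"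
    by (rule mult_right_mono) simp
  then have "?K \<subseteq> ?L"
    by (blast intro: order_trans)
  moreover have "?L \<in> sets A"
    unfolding A_def by (rule sets_Collect_lip_const_shallow_net_ge[OF d]) auto
  ultimately have "measure A ?K \<le> measure A ?L"
    by (rule A.finite_measure_mono)
  moreover have "1 - exp (- (t\<^sup>2 / 8)) \<le> measure A ?K"
    unfolding A_def \<sigma>_def by (rule prob_lip_const_shallow_net_ge_norm_outer_weights) (use N t d in auto)
  ultimately show ?thesis by linarith
qed

lemma sets_net_measure_lip_const_ge:
  assumes d: "d \<ge> 1" and [measurable_cong]: "\<And>i. sets (D0 i) = sets borel" "sets D1 = sets borel"
  shows "{(W0, W1, b0, b1) \<in> space (net_measure N d D0 D1). \<theta> \<le> lip_const d (shallow_net N d W0 W1 b0 b1)}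
    \<in> sets (net_measure N d D0 D1)"
  unfolding split_beta prod.collapse
proof (rule sets_Collect_lip_const_shallow_net_ge[OF d])
  fix i j assume "i < N" "j < d"
  then show "(\<lambda>\<omega>. fst \<omega> (i, j)) \<in> borel_measurable (net_measure N d D0 D1)"
    unfolding net_measure_def by (measurable, auto)
next
  fix i assume "i < N"
  then show "(\<lambda>\<omega>. fst (snd \<omega>) i) \<in> borel_measurable (net_measure N d D0 D1)"
    and "(\<lambda>\<omega>. fst (snd (snd \<omega>)) i) \<in> borel_measurable (net_measure N d D0 D1)"
    unfolding net_measure_def by (measurable, auto)+
qed (unfold net_measure_def, measurable)

lemma prob_lip_const_shallow_net_ge:
  fixes d N :: nat and D0 :: "nat \<Rightarrow> real measure" and D1 :: "real measure" and t u :: real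
  assumes d: "d \<ge> 1" and N: "N \<ge> 1"
    and D0: "\<And>i. prob_space (D0 i)" "\<And>i. sets (D0 i) = sets borel"
    and D1: "prob_space D1" "sets D1 = sets borel" and t: "t \<ge> 0" and u: "u \<ge> 0"
  shows "max 0 (1 - exp (- (t\<^sup>2 / 8))) * max 0 (1 - exp (- (u\<^sup>2 / 8))) \<le> measure (net_measure N d D0 D1)
    {(W0, W1, b0, b1) \<in> space (net_measure N d D0 D1).
       lip_const d (shallow_net N d W0 W1 b0 b1)
         \<ge> 1 / sqrt 2 * max 0 (1 - u / sqrt (real N)) * max 0 (sqrt (real d) - t)}"
    (is "?pt * ?pu \<le> measure _ ?S")
proof -
  define A where "A = PiM ({..<N} \<times> {..<d}) (\<lambda>_. density lborel (normal_density 0 (sqrt (2 / real N))))"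
  define B where "B = PiM {..<N} (\<lambda>_. density lborel std_normal_density)"
  define C where "C = PiM {..<N} D0 \<Otimes>\<^sub>M D1"
  have M: "net_measure N d D0 D1 = A \<Otimes>\<^sub>M (B \<Otimes>\<^sub>M C)"
    by (simp add: net_measure_def A_def B_def C_def)
  have A: "prob_space A"
    unfolding A_def by (rule prob_space_PiM) (use N prob_space_normal_density in auto)
  have B: "prob_space B"
    unfolding B_def by (rule prob_space_PiM) (use prob_space_normal_density in auto)
  have C: "prob_space C"
    unfolding C_def by (intro prob_space_pair prob_space_PiM D0 D1)
  have BC: "prob_space (B \<Otimes>\<^sub>M C)"
    using B C by (rule prob_space_pair)
  have S: "?S \<in> sets (net_measure N d D0 D1)"
    using sets_net_measure_lip_const_ge[OF d D0(2) D1(2)] by simp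
  define E where "E = {w \<in> space B. (max 0 (sqrt N - u))\<^sup>2 \<le> (\<Sum>i<N. (w i)\<^sup>2)} \<times> space C"
  have "(\<lambda>w. w i) \<in> borel_measurable B" if "i < N" for i
    using that unfolding B_def by (measurable, auto)
  then have E_sets: "{w \<in> space B. (max 0 (sqrt N - u))\<^sup>2 \<le> (\<Sum>i<N. (w i)\<^sup>2)} \<in> sets B"
    by (intro borel_measurable_le borel_measurable_const borel_measurable_sum borel_measurable_power) auto
  then have E: "E \<in> sets (B \<Otimes>\<^sub>M C)"
    unfolding E_def by (intro pair_measureI sets.top)
  have "measure (B \<Otimes>\<^sub>M C) E = measure B {w \<in> space B. (max 0 (sqrt N - u))\<^sup>2 \<le> (\<Sum>i<N. (w i)\<^sup>2)}"
    unfolding E_def by (rule measure_pair_measure_Times_space[OF C E_sets])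
  then have "?pu \<le> measure (B \<Otimes>\<^sub>M C) E"
    using gaussian_vector_norm_lower_tail[OF N u] by (simp add: B_def)
  moreover have "?pt * measure (B \<Otimes>\<^sub>M C) E \<le> measure (net_measure N d D0 D1) ?S"
  proof (rule measure_pair_measure_ge_mult[OF A BC _ E, folded M])
    fix y assume "y \<in> E"
    then obtain W1 b0 b1 where y: "y = (W1, b0, b1)" "y \<in> space (B \<Otimes>\<^sub>M C)"
      and W1: "(max 0 (sqrt N - u))\<^sup>2 \<le> (\<Sum>i<N. (W1 i)\<^sup>2)"
      by (auto simp: E_def space_pair_measure)
    then have "(\<lambda>x. (x, y)) -` ?S = {W0 \<in> space A.
        1 / sqrt 2 * max 0 (1 - u / sqrt N) * max 0 (sqrt d - t) \<le> lip_const d (shallow_net N d W0 W1 b0 b1)}"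
      by (auto simp: M space_pair_measure)
    then show "?pt \<le> measure A ((\<lambda>x. (x, y)) -` ?S)"
      using prob_lip_const_shallow_net_ge_given_outer_layer[OF N d t W1] by (simp add: A_def)
  qed (fact S, simp)
  ultimately show ?thesis
    by (meson max.cobounded1 mult_left_mono order_trans)
qed

theorem theorem6p1:
  "\<exists>c>0. \<forall>(d::nat) (N::nat) (D0::nat \<Rightarrow> real measure) (D1::real measure) (t::real) (u::real).
     d \<ge> 1 \<longrightarrow> N \<ge> 1 \<longrightarrow>
     (\<forall>i. prob_space (D0 i) \<and> sets (D0 i) = sets borel) \<longrightarrow>
     prob_space D1 \<longrightarrow> sets D1 = sets borel \<longrightarrow>
     t \<ge> 0 \<longrightarrow> u \<ge> 0 \<longrightarrow>
     measure (net_measure N d D0 D1)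
       {(W0, W1, b0, b1) \<in> space (net_measure N d D0 D1).
          lip_const d (shallow_net N d W0 W1 b0 b1)
            \<ge> 1 / sqrt 2 * max 0 (1 - u / sqrt (real N)) * max 0 (sqrt (real d) - t)}
     \<ge> max 0 (1 - 2 * exp (- c * t\<^sup>2)) * max 0 (1 - 2 * exp (- c * u\<^sup>2))"
proof -
  have weaker: "max 0 (1 - 2 * exp (- (1 / 8) * s\<^sup>2)) \<le> max 0 (1 - exp (- (s\<^sup>2 / 8)))" for s :: real
    by simp
  show ?thesis
    by (intro exI[of _ "1 / 8"] conjI allI impI
        order_trans[OF mult_mono[OF weaker weaker] prob_lip_const_shallow_net_ge]) auto
qed

end
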